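(* Let $L$ be a real vector space endowed with a vector preorder $\le$ (a preorder compatible with addition and multiplication by nonnegative scalars), let $C\subset L$ be a linear subspace and $M\subset C$ a nonempty linear subspace such that $C$ is exhaustive (for every $X\in L$ there is $X_0\in C$ with $X_0\ge X$). Let $H\colon C\to\mathbb{R}$ be a convex premium principle, let $L'_+$ be the set of all monotone linear functionals $\mu\colon L\to\mathbb{R}$, and for $\mu\in L'_+$ let $H^*(\mu):=\sup_{X\in C}(\mu(X)-H(X))\in[0,\infty]$. Let $R_{\mathrm{Max}}(X):=\inf\{H(X_0)\mid X_0\in C,\ X_0\ge X\}$ for $X\in L$. Then $$R_{\mathrm{Max}}(X)=\max_{\mu\in L'_+}\big(\mu(X)-H^*(\mu)\big)\quad\text{for all }X\in L,$$ $$H^*(\mu)=\sup_{X\in L}\big(\mu(X)-R_{\mathrm{Max}}(X)\big)\quad\text{for all }\mu\in L'_+,$$ and $H^*(\mu)<\infty$ implies $\mu(m)=H(m)$ for all $m\in M$.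
   Context: A premium principle is a map $H\colon C\to\mathbb{R}$ with (P1') $H(X+m)=H(X)+H(m)$ for all $X\in C$, $m\in M$; (P2') $H(0)=0$ and $H(X)\ge0$ for all $X\in C$ with $X\ge0$; (P3') $\inf\{H(X_0)\mid X_0\in C,\ X_0\ge X\}>-\infty$ for all $X\in L$. Convex means $H(\lambda X+(1-\lambda)Y)\le\lambda H(X)+(1-\lambda)H(Y)$ for $X,Y\in C$, $\lambda\in[0,1]$. A linear functional $\mu$ is monotone if $\mu(X)\le\mu(Y)$ whenever $X\le Y$. *)

theory Defs
  imports "HOL-Analysis.Analysis"
begin

definition vector_preorder :: "('a::real_vector \<Rightarrow> 'a \<Rightarrow> bool) \<Rightarrow> bool" where
  "vector_preorder le \<longleftrightarrow>
     (\<forall>X. le X X) \<and>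
     (\<forall>X Y Z. le X Y \<longrightarrow> le Y Z \<longrightarrow> le X Z) \<and>
     (\<forall>X Y Z. le X Y \<longrightarrow> le (X + Z) (Y + Z)) \<and>
     (\<forall>X Y (c::real). le X Y \<longrightarrow> 0 \<le> c \<longrightarrow> le (c *\<^sub>R X) (c *\<^sub>R Y))"

definition exhaustive :: "('a \<Rightarrow> 'a \<Rightarrow> bool) \<Rightarrow> 'a set \<Rightarrow> bool" where
  "exhaustive le C \<longleftrightarrow> (\<forall>X. \<exists>X0\<in>C. le X X0)"

text \<open>Premium principle H : C \<rightarrow> R (only the values on C matter), axioms (P1')--(P3').\<close>
definition premium_principle ::
  "('a::real_vector \<Rightarrow> 'a \<Rightarrow> bool) \<Rightarrow> 'a set \<Rightarrow> 'a set \<Rightarrow> ('a \<Rightarrow> real) \<Rightarrow> bool" where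
  "premium_principle le C M H \<longleftrightarrow>
     (\<forall>X\<in>C. \<forall>m\<in>M. H (X + m) = H X + H m) \<and>
     H 0 = 0 \<and> (\<forall>X\<in>C. le 0 X \<longrightarrow> 0 \<le> H X) \<and>
     (\<forall>X. bdd_below {H X0 | X0. X0 \<in> C \<and> le X X0})"

definition convex_premium :: "'a::real_vector set \<Rightarrow> ('a \<Rightarrow> real) \<Rightarrow> bool" where
  "convex_premium C H \<longleftrightarrow>
     (\<forall>X\<in>C. \<forall>Y\<in>C. \<forall>t::real. 0 \<le> t \<longrightarrow> t \<le> 1 \<longrightarrow>
        H (t *\<^sub>R X + (1 - t) *\<^sub>R Y) \<le> t * H X + (1 - t) * H Y)"

definition monotone_linear_functionals :: "('a::real_vector \<Rightarrow> 'a \<Rightarrow> bool) \<Rightarrow> ('a \<Rightarrow> real) set" where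
  "monotone_linear_functionals le = {\<mu>. linear \<mu> \<and> (\<forall>X Y. le X Y \<longrightarrow> \<mu> X \<le> \<mu> Y)}"

definition Hstar :: "'a set \<Rightarrow> ('a \<Rightarrow> real) \<Rightarrow> ('a \<Rightarrow> real) \<Rightarrow> ereal" where
  "Hstar C H \<mu> = (SUP X\<in>C. ereal (\<mu> X - H X))"

definition RMax :: "('a \<Rightarrow> 'a \<Rightarrow> bool) \<Rightarrow> 'a set \<Rightarrow> ('a \<Rightarrow> real) \<Rightarrow> 'a \<Rightarrow> real" where
  "RMax le C H X = Inf {H X0 | X0. X0 \<in> C \<and> le X X0}"

end

(*
  R_Max is monotone, and convex because H is convex on the subspace C. A Hahn-Banach
  argument (extend a linear minorant of a convex function one direction at a time, then
  take a maximal one by Zorn's lemma) gives every real-valued convex function on a real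
  vector space a linear subgradient at each point. A subgradient mu of R_Max at X is
  monotone because R_Max is, and for Y in C
    mu Y - H Y <= mu Y - R_Max Y <= mu X - R_Max X,
  so mu attains the maximum; the reverse inequality is weak duality, which also gives the
  formula for H^*. If H^*(mu) is finite, then mu - H is additive on M and bounded above,
  hence zero.
*)

theory Submission
  imports Defs
begin

text \<open>When \<^term>\<open>q 0 = 0\<close>, such a subspace of \<^typ>\<open>'a \<times> real\<close> is the graph of a partial
  linear functional dominated by \<^term>\<open>q\<close>; these are the objects ordered by inclusion in
  the Zorn argument.\<close>

definition hypo_subspace :: "('a::real_vector \<Rightarrow> real) \<Rightarrow> ('a \<times> real) set \<Rightarrow> bool" where
  "hypo_subspace q G \<longleftrightarrow> subspace G \<and> (\<forall>(x, a)\<in>G. a \<le> q x)"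

lemma hypo_subspace_graph:
  assumes "hypo_subspace q G" "q 0 = 0" "(x, a) \<in> G" "(x, b) \<in> G"
  shows "a = b"
proof -
  have sub: "subspace G" and below: "\<And>x a. (x, a) \<in> G \<Longrightarrow> a \<le> q x"
    using assms(1) by (auto simp: hypo_subspace_def)
  have "(0, a - b) \<in> G" "(0, b - a) \<in> G"
    using subspace_diff[OF sub assms(3,4)] subspace_diff[OF sub assms(4,3)] by simp_all
  then have "a - b \<le> q 0" "b - a \<le> q 0"
    using below by blast+
  with assms(2) show ?thesis by simp
qed

text \<open>Any value between these two families of slopes extends the functional to the
  direction \<^term>\<open>z\<close>.\<close>

lemma hypo_subspace_slope_le:
  assumes q: "convex_on UNIV q" and G: "hypo_subspace q G"
    and ya: "(y, a) \<in> G" and yb: "(y', b) \<in> G" and s: "0 < s" and t: "0 < t"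
  shows "(a - q (y - s *\<^sub>R z)) / s \<le> (q (y' + t *\<^sub>R z) - b) / t"
proof -
  define u where "u = t / (s + t)"
  have u: "0 \<le> u" "u \<le> 1"
    using s t by (auto simp: u_def)
  have u': "1 - u = s / (s + t)"
    using s t by (simp add: u_def field_simps)
  have "u *\<^sub>R (y, a) + (1 - u) *\<^sub>R (y', b) \<in> G"
    using G ya yb by (intro subspace_add subspace_scale) (auto simp: hypo_subspace_def)
  then have "u * a + (1 - u) * b \<le> q (u *\<^sub>R y + (1 - u) *\<^sub>R y')"
    using G by (auto simp: hypo_subspace_def)
  also have "u *\<^sub>R y + (1 - u) *\<^sub>R y' = u *\<^sub>R (y - s *\<^sub>R z) + (1 - u) *\<^sub>R (y' + t *\<^sub>R z)"
    using s t by (simp add: u' algebra_simps) (simp add: u_def)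
  also have "q \<dots> \<le> u * q (y - s *\<^sub>R z) + (1 - u) * q (y' + t *\<^sub>R z)"
    using q u by (simp add: convex_on_alt)
  finally have "(t * a + s * b) / (s + t) \<le> (t * q (y - s *\<^sub>R z) + s * q (y' + t *\<^sub>R z)) / (s + t)"
    unfolding u' by (simp add: u_def add_divide_distrib)
  then have "t * a + s * b \<le> t * q (y - s *\<^sub>R z) + s * q (y' + t *\<^sub>R z)"
    using s t by (simp add: divide_le_cancel)
  then show ?thesis
    using s t by (simp add: field_simps)
qed

lemma hypo_subspace_span_insert:
  assumes G: "hypo_subspace q G"
    and up: "\<And>y a t. (y, a) \<in> G \<Longrightarrow> 0 < t \<Longrightarrow> a + t * c \<le> q (y + t *\<^sub>R z)"
    and down: "\<And>y a s. (y, a) \<in> G \<Longrightarrow> 0 < s \<Longrightarrow> a - s * c \<le> q (y - s *\<^sub>R z)"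
  shows "hypo_subspace q (span (insert (z, c) G))"
proof -
  have span_G: "span G = G"
    using G by (simp add: hypo_subspace_def span_eq_iff)
  have "a \<le> q x" if "(x, a) \<in> span (insert (z, c) G)" for x a
  proof -
    from that obtain k where "(x, a) - k *\<^sub>R (z, c) \<in> G"
      unfolding span_breakdown_eq span_G by blast
    then have k: "(x - k *\<^sub>R z, a - k * c) \<in> G"
      by simp
    consider "0 < k" | "k = 0" | "0 < - k"
      by linarith
    then show ?thesis
    proof cases
      case 1
      then show ?thesis using up[OF k 1] by simp
    next
      case 2
      then show ?thesis using k G by (auto simp: hypo_subspace_def)
    next
      case 3
      then show ?thesis using down[OF k 3] by simp
    qed
  qed
  then show ?thesis
    by (auto simp: hypo_subspace_def subspace_span)
qed

lemma hypo_subspace_extend: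
  assumes q: "convex_on UNIV q" and G: "hypo_subspace q G"
  shows "\<exists>c. hypo_subspace q (span (insert (z, c) G))"
proof -
  define slopes where "slopes = {(a - q (y - s *\<^sub>R z)) / s | y a s. (y, a) \<in> G \<and> 0 < s}"
  have "0 \<in> G"
    using G by (simp add: hypo_subspace_def subspace_0)
  then have G0: "(0, 0) \<in> G"
    by (simp add: zero_prod_def)
  then have "(0 - q (0 - 1 *\<^sub>R z)) / 1 \<in> slopes"
    unfolding slopes_def using zero_less_one by blast
  then have ne: "slopes \<noteq> {}"
    by blast
  have upper: "\<sigma> \<le> (q (y' + t *\<^sub>R z) - b) / t"
    if "\<sigma> \<in> slopes" "(y', b) \<in> G" "0 < t" for \<sigma> y' b t
  proof -
    from \<open>\<sigma> \<in> slopes\<close> obtain y a s where "\<sigma> = (a - q (y - s *\<^sub>R z)) / s" "(y, a) \<in> G" "0 < s"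
      unfolding slopes_def by blast
    then show ?thesis
      using hypo_subspace_slope_le[OF q G _ that(2) _ that(3)] by blast
  qed
  have bdd: "bdd_above slopes"
    using upper[OF _ G0 zero_less_one] by (intro bdd_aboveI) blast
  have "hypo_subspace q (span (insert (z, Sup slopes) G))"
  proof (rule hypo_subspace_span_insert[OF G])
    fix y a and t :: real assume "(y, a) \<in> G" "0 < t"
    then have "Sup slopes \<le> (q (y + t *\<^sub>R z) - a) / t"
      using upper by (intro cSup_least[OF ne]) blast
    with \<open>0 < t\<close> show "a + t * Sup slopes \<le> q (y + t *\<^sub>R z)"
      by (simp add: field_simps)
  next
    fix y a and s :: real assume "(y, a) \<in> G" "0 < s"
    then have "(a - q (y - s *\<^sub>R z)) / s \<in> slopes"
      unfolding slopes_def by blast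
    then have "(a - q (y - s *\<^sub>R z)) / s \<le> Sup slopes"
      using bdd by (rule cSup_upper)
    with \<open>0 < s\<close> show "a - s * Sup slopes \<le> q (y - s *\<^sub>R z)"
      by (simp add: field_simps)
  qed
  then show ?thesis
    by blast
qed

lemma subspace_Union_chain:
  assumes "\<C> \<noteq> {}" "\<And>S. S \<in> \<C> \<Longrightarrow> subspace S"
    and chain: "\<And>S T. S \<in> \<C> \<Longrightarrow> T \<in> \<C> \<Longrightarrow> S \<subseteq> T \<or> T \<subseteq> S"
  shows "subspace (\<Union>\<C>)"
  unfolding subspace_def
proof (intro conjI ballI allI)
  show "0 \<in> \<Union>\<C>"
    using assms(1,2) subspace_0 by blast
next
  fix x y assume "x \<in> \<Union>\<C>" "y \<in> \<Union>\<C>"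
  then obtain S where "S \<in> \<C>" "x \<in> S" "y \<in> S"
    using chain by blast
  then show "x + y \<in> \<Union>\<C>"
    using assms(2) subspace_add by blast
next
  fix c x assume "x \<in> \<Union>\<C>"
  then show "c *\<^sub>R x \<in> \<Union>\<C>"
    using assms(2) subspace_scale by blast
qed

lemma hypo_subspace_maximal_exists:
  assumes q0: "q 0 = 0"
  obtains G where "hypo_subspace q G" "\<And>G'. hypo_subspace q G' \<Longrightarrow> G \<subseteq> G' \<Longrightarrow> G' = G"
proof -
  have "\<exists>G\<in>Collect (hypo_subspace q). \<forall>G'\<in>Collect (hypo_subspace q). G \<subseteq> G' \<longrightarrow> G' = G"
  proof (rule subset_Zorn_nonempty)
    have "hypo_subspace q {0}"
      using subspace_single_0[where 'a="'a \<times> real"] by (simp add: hypo_subspace_def zero_prod_def q0)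
    then show "Collect (hypo_subspace q) \<noteq> {}"
      by blast
  next
    fix \<C> assume ne: "\<C> \<noteq> {}" and chain: "subset.chain (Collect (hypo_subspace q)) \<C>"
    then have hypo: "\<And>S. S \<in> \<C> \<Longrightarrow> hypo_subspace q S"
      and nested: "\<And>S T. S \<in> \<C> \<Longrightarrow> T \<in> \<C> \<Longrightarrow> S \<subseteq> T \<or> T \<subseteq> S"
      by (auto simp: subset_chain_def)
    have "subspace (\<Union>\<C>)"
      using hypo by (intro subspace_Union_chain[OF ne _ nested]) (simp add: hypo_subspace_def)
    moreover have "a \<le> q x" if "(x, a) \<in> \<Union>\<C>" for x a
      using that hypo unfolding hypo_subspace_def by blast
    ultimately show "\<Union>\<C> \<in> Collect (hypo_subspace q)"
      by (auto simp: hypo_subspace_def)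
  qed
  then show ?thesis
    using that by blast
qed

lemma maximal_hypo_subspace_total:
  assumes q: "convex_on UNIV q" and G: "hypo_subspace q G"
    and maximal: "\<And>G'. hypo_subspace q G' \<Longrightarrow> G \<subseteq> G' \<Longrightarrow> G' = G"
  shows "\<exists>a. (x, a) \<in> G"
proof -
  obtain c where "hypo_subspace q (span (insert (x, c) G))"
    using hypo_subspace_extend[OF q G] by blast
  moreover have "G \<subseteq> span (insert (x, c) G)"
    using span_superset[of "insert (x, c) G"] by blast
  ultimately have "span (insert (x, c) G) = G"
    by (rule maximal)
  then show ?thesis
    using span_superset[of "insert (x, c) G"] by blast
qed

lemma convex_on_linear_minorant:
  fixes q :: "'a::real_vector \<Rightarrow> real"
  assumes q: "convex_on UNIV q" and q0: "q 0 = 0"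
  shows "\<exists>l. linear l \<and> (\<forall>x. l x \<le> q x)"
proof -
  obtain G where G: "hypo_subspace q G"
    and maximal: "\<And>G'. hypo_subspace q G' \<Longrightarrow> G \<subseteq> G' \<Longrightarrow> G' = G"
    using hypo_subspace_maximal_exists[of q, OF q0] by blast
  note total = maximal_hypo_subspace_total[OF q G maximal]
  define l where "l x = (THE a. (x, a) \<in> G)" for x
  have graph_point: "(x, l x) \<in> G" for x
  proof -
    obtain a where a: "(x, a) \<in> G"
      using total by blast
    then have "l x = a"
      unfolding l_def by (rule the_equality) (use a hypo_subspace_graph[OF G q0] in blast)
    with a show ?thesis
      by simp
  qed
  have graph_l: "(x, a) \<in> G \<longleftrightarrow> a = l x" for x a
    using graph_point hypo_subspace_graph[OF G q0] by blast
  have sub: "subspace G"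
    using G by (simp add: hypo_subspace_def)
  have "linear l"
  proof
    fix x y
    have "(x, l x) + (y, l y) \<in> G"
      by (rule subspace_add[OF sub graph_point graph_point])
    then show "l (x + y) = l x + l y"
      by (simp add: graph_l)
  next
    fix c x
    have "c *\<^sub>R (x, l x) \<in> G"
      by (rule subspace_scale[OF sub graph_point])
    then show "l (c *\<^sub>R x) = c *\<^sub>R l x"
      by (simp add: graph_l)
  qed
  moreover have "l x \<le> q x" for x
    using G graph_point by (auto simp: hypo_subspace_def)
  ultimately show ?thesis
    by blast
qed

lemma convex_on_subgradient:
  fixes f :: "'a::real_vector \<Rightarrow> real"
  assumes f: "convex_on UNIV f"
  shows "\<exists>l. linear l \<and> (\<forall>y. f x + l (y - x) \<le> f y)"
proof -
  have cvx: "convex_on UNIV (\<lambda>y. f (x + y) - f x)"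
    unfolding convex_on_alt
  proof (intro conjI ballI allI impI)
    fix a b and t :: real assume "0 \<le> t \<and> t \<le> 1"
    then have "f (t *\<^sub>R (x + a) + (1 - t) *\<^sub>R (x + b)) \<le> t * f (x + a) + (1 - t) * f (x + b)"
      using f by (simp add: convex_on_alt)
    moreover have "t *\<^sub>R (x + a) + (1 - t) *\<^sub>R (x + b) = x + (t *\<^sub>R a + (1 - t) *\<^sub>R b)"
      by (simp add: algebra_simps)
    ultimately show "f (x + (t *\<^sub>R a + (1 - t) *\<^sub>R b)) - f x
        \<le> t * (f (x + a) - f x) + (1 - t) * (f (x + b) - f x)"
      by (simp add: algebra_simps)
  qed simp
  obtain l where l: "linear l" "\<And>y. l y \<le> f (x + y) - f x"
    using convex_on_linear_minorant[OF cvx] by auto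
  have "f x + l (y - x) \<le> f y" for y
    using l(2)[of "y - x"] by simp
  with l(1) show ?thesis
    by blast
qed

lemma Hstar_upper: "Y \<in> C \<Longrightarrow> ereal (\<mu> Y - H Y) \<le> Hstar C H \<mu>"
  unfolding Hstar_def by (rule SUP_upper)

lemma Hstar_le_ereal_iff: "Hstar C H \<mu> \<le> ereal h \<longleftrightarrow> (\<forall>Y\<in>C. \<mu> Y - H Y \<le> h)"
  unfolding Hstar_def by (simp add: SUP_le_iff)

locale premium_setting =
  fixes le :: "'a::real_vector \<Rightarrow> 'a \<Rightarrow> bool" and C :: "'a set" and H :: "'a \<Rightarrow> real"
  assumes vector_preorder: "vector_preorder le"
    and subspace_C: "subspace C"
    and exhaustive: "exhaustive le C"
    and bdd_below_premiums: "bdd_below {H X0 | X0. X0 \<in> C \<and> le X X0}"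
begin

lemma preorder_refl: "le X X"
  and preorder_trans: "le X Y \<Longrightarrow> le Y Z \<Longrightarrow> le X Z"
  and preorder_add_right: "le X Y \<Longrightarrow> le (X + Z) (Y + Z)"
  and preorder_scaleR: "le X Y \<Longrightarrow> 0 \<le> c \<Longrightarrow> le (c *\<^sub>R X) (c *\<^sub>R Y)"
  using vector_preorder unfolding vector_preorder_def by blast+

lemma preorder_add_mono:
  assumes "le X X'" "le Y Y'"
  shows "le (X + Y) (X' + Y')"
proof -
  have "le (X + Y) (X' + Y)"
    using assms(1) by (rule preorder_add_right)
  moreover have "le (X' + Y) (X' + Y')"
    using preorder_add_right[OF assms(2), of X'] by (simp add: add.commute)
  ultimately show ?thesis
    by (rule preorder_trans)
qed

lemma RMax_le: "X0 \<in> C \<Longrightarrow> le X X0 \<Longrightarrow> RMax le C H X \<le> H X0"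
  unfolding RMax_def by (rule cInf_lower[OF _ bdd_below_premiums]) blast

lemma RMax_greatest:
  assumes "\<And>X0. X0 \<in> C \<Longrightarrow> le X X0 \<Longrightarrow> b \<le> H X0"
  shows "b \<le> RMax le C H X"
proof -
  obtain X0 where "X0 \<in> C" "le X X0"
    using exhaustive unfolding exhaustive_def by blast
  then have "{H X0 | X0. X0 \<in> C \<and> le X X0} \<noteq> {}"
    by blast
  then show ?thesis
    unfolding RMax_def using assms by (intro cInf_greatest) blast+
qed

lemma RMax_approx:
  assumes "0 < e"
  obtains X0 where "X0 \<in> C" "le X X0" "H X0 < RMax le C H X + e"
proof -
  have "\<not> RMax le C H X + e \<le> RMax le C H X"
    using assms by simp
  then show ?thesis
    using RMax_greatest that by (meson not_le)
qed

lemma RMax_le_premium: "X \<in> C \<Longrightarrow> RMax le C H X \<le> H X"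
  using RMax_le preorder_refl by blast

lemma RMax_mono: "le X Y \<Longrightarrow> RMax le C H X \<le> RMax le C H Y"
  by (intro RMax_greatest RMax_le) (auto intro: preorder_trans)

lemma convex_on_RMax:
  assumes H: "convex_on C H"
  shows "convex_on UNIV (RMax le C H)"
  unfolding convex_on_alt
proof (intro conjI ballI allI impI)
  fix X Y and t :: real assume "0 \<le> t \<and> t \<le> 1"
  then have t: "0 \<le> t" "0 \<le> 1 - t"
    by simp_all
  show "RMax le C H (t *\<^sub>R X + (1 - t) *\<^sub>R Y) \<le> t * RMax le C H X + (1 - t) * RMax le C H Y"
  proof (rule field_le_epsilon)
    fix e :: real assume "0 < e"
    obtain X0 where X0: "X0 \<in> C" "le X X0" "H X0 < RMax le C H X + e"
      using RMax_approx[OF \<open>0 < e\<close>] by blast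
    obtain Y0 where Y0: "Y0 \<in> C" "le Y Y0" "H Y0 < RMax le C H Y + e"
      using RMax_approx[OF \<open>0 < e\<close>] by blast
    have "t *\<^sub>R X0 + (1 - t) *\<^sub>R Y0 \<in> C"
      using subspace_C X0(1) Y0(1) by (intro subspace_add subspace_scale)
    moreover have "le (t *\<^sub>R X + (1 - t) *\<^sub>R Y) (t *\<^sub>R X0 + (1 - t) *\<^sub>R Y0)"
      using X0(2) Y0(2) t by (intro preorder_add_mono preorder_scaleR)
    ultimately have "RMax le C H (t *\<^sub>R X + (1 - t) *\<^sub>R Y) \<le> H (t *\<^sub>R X0 + (1 - t) *\<^sub>R Y0)"
      by (rule RMax_le)
    also have "\<dots> \<le> t * H X0 + (1 - t) * H Y0"
      using H X0(1) Y0(1) t by (simp add: convex_on_alt)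
    also have "\<dots> \<le> t * (RMax le C H X + e) + (1 - t) * (RMax le C H Y + e)"
      using X0(3) Y0(3) t by (intro add_mono mult_left_mono) auto
    also have "\<dots> = t * RMax le C H X + (1 - t) * RMax le C H Y + e"
      by (simp add: algebra_simps)
    finally show "RMax le C H (t *\<^sub>R X + (1 - t) *\<^sub>R Y) \<le> t * RMax le C H X + (1 - t) * RMax le C H Y + e" .
  qed
qed simp

lemma Hstar_ge_dual_RMax:
  assumes mono: "\<And>X Y. le X Y \<Longrightarrow> \<mu> X \<le> \<mu> Y"
  shows "ereal (\<mu> X) - ereal (RMax le C H X) \<le> Hstar C H \<mu>"
proof (cases "Hstar C H \<mu>")
  case (real h)
  have "\<mu> X - h \<le> RMax le C H X"
  proof (rule RMax_greatest)
    fix X0 assume "X0 \<in> C" "le X X0"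
    then have "\<mu> X \<le> \<mu> X0" "\<mu> X0 - H X0 \<le> h"
      using mono real Hstar_le_ereal_iff[of C H \<mu> h] by auto
    then show "\<mu> X - h \<le> H X0"
      by simp
  qed
  with real show ?thesis
    by simp
next
  case MInf
  with Hstar_upper[OF subspace_0[OF subspace_C], of \<mu> H] show ?thesis
    by simp
qed simp

lemma Hstar_eq_SUP_RMax:
  assumes mono: "\<And>X Y. le X Y \<Longrightarrow> \<mu> X \<le> \<mu> Y"
  shows "Hstar C H \<mu> = (SUP X. ereal (\<mu> X) - ereal (RMax le C H X))"
proof (rule antisym)
  show "Hstar C H \<mu> \<le> (SUP X. ereal (\<mu> X) - ereal (RMax le C H X))"
    unfolding Hstar_def
  proof (rule SUP_mono)
    fix Y assume "Y \<in> C"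
    then have "ereal (\<mu> Y - H Y) \<le> ereal (\<mu> Y) - ereal (RMax le C H Y)"
      using RMax_le_premium by simp
    then show "\<exists>X\<in>UNIV. ereal (\<mu> Y - H Y) \<le> ereal (\<mu> X) - ereal (RMax le C H X)"
      by blast
  qed
  show "(SUP X. ereal (\<mu> X) - ereal (RMax le C H X)) \<le> Hstar C H \<mu>"
    using Hstar_ge_dual_RMax[OF mono] by (rule SUP_least)
qed

lemma subgradient_RMax_monotone:
  assumes l: "linear l" and subgradient: "\<And>Y. RMax le C H X + l (Y - X) \<le> RMax le C H Y"
  shows "l \<in> monotone_linear_functionals le"
  unfolding monotone_linear_functionals_def
proof (intro CollectI conjI allI impI l)
  fix Y Z assume "le Y Z"
  then have "le (X + (Y - Z)) X"
    using preorder_add_right[of Y Z "X - Z"] by (simp add: algebra_simps)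
  then have "RMax le C H X + l (X + (Y - Z) - X) \<le> RMax le C H X"
    using subgradient RMax_mono order_trans by blast
  then show "l Y \<le> l Z"
    using linear_diff[OF l] by simp
qed

lemma RMax_dual_attained:
  assumes H: "convex_on C H"
  shows "\<exists>\<mu>\<in>monotone_linear_functionals le. ereal (\<mu> X) - Hstar C H \<mu> = ereal (RMax le C H X)"
proof -
  obtain l where l: "linear l" "\<And>Y. RMax le C H X + l (Y - X) \<le> RMax le C H Y"
    using convex_on_subgradient[OF convex_on_RMax[OF H]] by blast
  have mono: "l \<in> monotone_linear_functionals le"
    using subgradient_RMax_monotone l by blast
  have "Hstar C H l \<le> ereal (l X - RMax le C H X)"
    unfolding Hstar_le_ereal_iff
  proof
    fix Y assume "Y \<in> C"
    then show "l Y - H Y \<le> l X - RMax le C H X"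
      using l(2)[of Y] RMax_le_premium[of Y] linear_diff[OF l(1)] by simp
  qed
  moreover have "ereal (l X) - ereal (RMax le C H X) \<le> Hstar C H l"
    using mono by (intro Hstar_ge_dual_RMax) (simp add: monotone_linear_functionals_def)
  ultimately have "Hstar C H l = ereal (l X - RMax le C H X)"
    by simp
  with mono show ?thesis
    by (intro bexI[of _ l]) auto
qed

end

lemma additive_bounded_above_vanishes:
  fixes f :: "'a::real_vector \<Rightarrow> real"
  assumes M: "subspace M" and add: "\<And>x y. x \<in> M \<Longrightarrow> y \<in> M \<Longrightarrow> f (x + y) = f x + f y"
    and bound: "\<And>x. x \<in> M \<Longrightarrow> f x \<le> h" and x: "x \<in> M"
  shows "f x = 0"
proof -
  have f0: "f 0 = 0"
    using add[OF subspace_0[OF M] subspace_0[OF M]] by simp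
  have mult: "f (real n *\<^sub>R y) = real n * f y" if "y \<in> M" for y n
  proof (induction n)
    case (Suc n)
    have "f (real (Suc n) *\<^sub>R y) = f (real n *\<^sub>R y + y)"
      by (simp add: algebra_simps)
    also have "\<dots> = real n * f y + f y"
      using add[OF subspace_scale[OF M that] that] Suc.IH by simp
    finally show ?case
      by (simp add: algebra_simps)
  qed (simp add: f0)
  have nonpos: "f y \<le> 0" if "y \<in> M" for y
  proof (rule ccontr)
    assume "\<not> f y \<le> 0"
    obtain n :: nat where "h / f y < real n"
      using reals_Archimedean2 by blast
    with \<open>\<not> f y \<le> 0\<close> have "h < real n * f y"
      by (simp add: field_simps)
    with bound[OF subspace_scale[OF M that, of "real n"]] mult[OF that, of n] show False
      by linarith
  qed
  have "f x + f (- x) = 0"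
    using add[OF x subspace_neg[OF M x]] f0 by simp
  with nonpos[OF x] nonpos[OF subspace_neg[OF M x]] show ?thesis
    by linarith
qed

lemma Hstar_finite_imp_eq_on_subspace:
  assumes M: "subspace M" "M \<subseteq> C" and add: "\<And>X m. X \<in> C \<Longrightarrow> m \<in> M \<Longrightarrow> H (X + m) = H X + H m"
    and \<mu>: "linear \<mu>" and finite: "Hstar C H \<mu> < \<infinity>" and m: "m \<in> M"
  shows "\<mu> m = H m"
proof -
  obtain h where "Hstar C H \<mu> \<le> ereal h"
    using finite by (cases "Hstar C H \<mu>") auto
  then have bound: "\<mu> Y - H Y \<le> h" if "Y \<in> C" for Y
    using that Hstar_le_ereal_iff by blast
  have "\<mu> m - H m = 0"
  proof (rule additive_bounded_above_vanishes[OF M(1) _ _ m])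
    fix x y assume "x \<in> M" "y \<in> M"
    then show "\<mu> (x + y) - H (x + y) = (\<mu> x - H x) + (\<mu> y - H y)"
      using add M(2) linear_add[OF \<mu>] by auto
  next
    fix x assume "x \<in> M"
    then show "\<mu> x - H x \<le> h"
      using bound M(2) by blast
  qed
  then show ?thesis
    by simp
qed

theorem theorem4p8:
  fixes le :: "'a::real_vector \<Rightarrow> 'a \<Rightarrow> bool"
    and C M :: "'a set"
    and H :: "'a \<Rightarrow> real"
  assumes "vector_preorder le"
    and "subspace C" and "subspace M" and "M \<subseteq> C" and "M \<noteq> {}"
    and "exhaustive le C"
    and "premium_principle le C M H"
    and "convex_premium C H"
  shows "(\<forall>X. (\<exists>\<mu>\<in>monotone_linear_functionals le.
                 ereal (\<mu> X) - Hstar C H \<mu> = ereal (RMax le C H X)) \<and>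
             (\<forall>\<mu>\<in>monotone_linear_functionals le.
                 ereal (\<mu> X) - Hstar C H \<mu> \<le> ereal (RMax le C H X))) \<and>
    (\<forall>\<mu>\<in>monotone_linear_functionals le.
           Hstar C H \<mu> = (SUP X. ereal (\<mu> X) - ereal (RMax le C H X))) \<and>
    (\<forall>\<mu>\<in>monotone_linear_functionals le.
           Hstar C H \<mu> < \<infinity> \<longrightarrow> (\<forall>m\<in>M. \<mu> m = H m))"
proof -
  interpret premium_setting le C H
    using assms(1,2,6,7) by unfold_locales (auto simp: premium_principle_def)
  have convex: "convex_on C H"
    using assms(2,8) by (simp add: convex_on_alt convex_premium_def subspace_imp_convex)
  have add: "\<And>X m. X \<in> C \<Longrightarrow> m \<in> M \<Longrightarrow> H (X + m) = H X + H m"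
    using assms(7) by (simp add: premium_principle_def)
  have weak: "ereal (\<mu> X) - Hstar C H \<mu> \<le> ereal (RMax le C H X)"
    if "\<mu> \<in> monotone_linear_functionals le" for \<mu> X
    using Hstar_ge_dual_RMax[of \<mu> X] that
    by (cases "Hstar C H \<mu>") (auto simp: monotone_linear_functionals_def)
  show ?thesis
    using RMax_dual_attained[OF convex] weak Hstar_eq_SUP_RMax
      Hstar_finite_imp_eq_on_subspace[OF assms(3,4) add]
    by (auto simp: monotone_linear_functionals_def)
qed

end
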